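(* Let $\Pi$ be a program of $(d,f)$-tree-like rules without inequalities over the $(\mathrm{Col},\delta)$-signature, and let $\mathcal N_\Pi$ be the GNN constructed from $\Pi$ as described in the context, with $L=d+2$ layers. For every $(\mathrm{Col},\delta)$-dataset $D$, every layer $1\le\ell<L$, every position $1\le i\le\delta_\ell$ and every term $t$ occurring in $D$, letting $\mathbf v_\ell$ be the vector labelling the vertex $v_t$ at layer $\ell$ when $\mathcal N_\Pi$ is applied to $\mathrm{enc}(D)$: the $i$-th component of $\mathbf v_\ell$ equals $1$ if there exists a substitution $\nu$ with $\nu(x)=t$ such that every atom of $\tau_i\nu$ belongs to $D$, and equals $0$ otherwise.
   Context: Datalog basics. Terms are constants or variables; atoms are $P(t_1,\dots,t_n)$; a fact is a variable-free atom; a dataset is a finite set of facts. A rule is $B_1\wedge\dots\wedge B_n\to H$ (literals $B_i$, possibly inequalities $s\neq t$; empty body written $\top$); a program is a finite set of rules. A substitution maps finitely many variables to variable-free terms. For a rule $r$ and dataset $D$, $T_r(D)$ is the set of $H\nu$ for each substitution $\nu$ mapping all variables of $r$ to terms occurring in $D$ such that every instantiated body atom lies in $D$ and every instantiated body inequality $s\neq t$ has $s\neq t$; $T_\Pi(D)=\bigcup_{r\in\Pi}T_r(D)$. Formulas/rules are equal up to variable renaming if a bijection of variables maps one onto the other with exactly the same conjuncts. GNNs and canonical encoding. For finite colour set $\mathrm{Col}$ and $\delta\in\mathbb N$, the $(\mathrm{Col},\delta)$-signature has binary predicates $E^c$ ($c\in\mathrm{Col}$) and unary predicates $U_1,\dots,U_\delta$;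 a $(\mathrm{Col},\delta)$-dataset is a dataset over it. Its canonical encoding $\mathrm{enc}(D)$ is the graph with a vertex $v_t$ per term $t$ occurring in $D$, edge sets $E^c=\{(v_t,v_s)\mid E^c(t,s)\in D\}$, and feature vector of $v_t$ in $\{0,1\}^\delta$ whose $j$-th entry is $1$ iff $U_j(t)\in D$. A $(\mathrm{Col},\delta)$-GNN with $L$ layers has dimensions $\delta_0=\delta,\dots,\delta_L=\delta$, matrices $A_\ell,B_\ell^c\in\mathbb R^{\delta_\ell\times\delta_{\ell-1}}$, biases $b_\ell\in\mathbb R^{\delta_\ell}$, aggregations $\mathrm{agg}_\ell$, activation $\sigma$ and classification $\mathrm{cls}$; the layer-$\ell$ vector of $v$ is $\mathbf v_\ell=\sigma(A_\ell\mathbf v_{\ell-1}+\sum_cB_\ell^c\,\mathrm{agg}_\ell(\{\!\{\mathbf u_{\ell-1}\mid(v,u)\in E^c\}\!\})+b_\ell)$ with $\mathbf v_0$ the input feature; $T_{\mathcal N}(D)$ is $D$'s binary facts plus $U_i(t)$ for each $t$ and $i$ with $\mathrm{cls}$ of the $i$-th entry of the layer-$L$ vector of $v_t$ equal to $1$. Tree-like formulas. Inductively: $\top$ and $U(x)$ ($U$ unary) are tree-like for $x$; if $\varphi_1,\varphi_2$ are tree-like for $x$ sharing no variable other than $x$, then $\varphi_1\wedge\varphi_2$ is tree-like for $x$; if $\varphi_1,\dots,\varphi_n$ are tree-like for pairwise distinct variables $y_1,\dots,y_n$, none containing $x$ and pairwise variable-disjoint, then $\bigwedge_{i=1}^n(E^c(x,y_i)\wedge\varphi_i)\wedge\bigwedge_{i<j}y_i\neq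 y_j$ is tree-like for $x$. The fan-out of a variable $x$ is the number of distinct $y$ with some $E^c(x,y)$ a conjunct; the depth of $x$ is the maximal length $n$ of a chain $E^{c_1}(x_0,x_1),\dots,E^{c_n}(x_{n-1},x_n)$ of conjuncts with $x_n=x$; the depth of the formula is the maximum depth of its variables. A formula is $(d,f)$-tree-like if each variable of depth $i$ has $i\le d$ and fan-out at most $f\cdot(d-i)$; a rule is $(d,f)$-tree-like if it is $\varphi\to U(x)$ with $\varphi$ a $(d,f)$-tree-like formula for $x$. Construction of $\mathcal N_\Pi$. Fix natural numbers $d,f$ and a program $\Pi$ of $(d,f)$-tree-like rules without inequalities. Let $\tau_1,\dots,\tau_n$ list, up to variable renaming and each exactly once, all $(d,f)$-tree-like formulas for a fixed variable $x$ without inequalities, ordered by non-decreasing depth. Write each as $\tau_i=\varphi_{i,0}\wedge\bigwedge_{k=1}^{m_i}(E^{c_k}(x,y_k)\wedge\varphi_{i,k})$, where $\varphi_{i,0}$ is a conjunction of unary atoms on $x$ (possibly $\top$), each $\varphi_{i,k}$ ($k\ge1$) is a $(d-1,f)$-tree-like formula for $y_k$ (possibly $\top$), the $\varphi_{i,k}$ are pairwise variable-disjoint, and the colours $c_k$ need not be distinct. $\mathcal N_\Pi$ is the $(\mathrm{Col},\delta)$-GNN with $L=d+2$ layers, aggregation $\max$ (componentwise, $0$ on the empty multiset) in every layer, activation $\mathrm{ReLU}(z)=\max(0,z)$, classification the step function with threshold $1$, and for $1\le\ell<L$ dimension $\delta_\ell$ equal to the number of formulas $\tau_i$ of depth at most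 $\ell-1$ (so these are $\tau_1,\dots,\tau_{\delta_\ell}$). For $c\in\mathrm{Col}$, $1\le\ell\le L$, $1\le i\le\delta_\ell$, $1\le j\le\delta_{\ell-1}$: $(A_\ell)_{i,j}=1$ if (a) $\ell=1$ and $\tau_i$ contains $U_j(x)$; or (b) $2\le\ell<L$ and either $i\le\delta_{\ell-1}$ and $i=j$, or $\delta_{\ell-1}<i\le\delta_\ell$ and $\varphi_{i,0}$ equals $\tau_j$ (up to renaming); or (c) $\ell=L$ and $\Pi$ contains the rule $\tau_j\to U_i(x)$ up to variable renaming; otherwise $(A_\ell)_{i,j}=0$. $(B_\ell^c)_{i,j}=1$ if $2\le\ell<L$ and there is $1\le k\le m_i$ with $c=c_k$ and $\varphi_{i,k}$ equal to $\tau_j$ up to variable renaming; otherwise $0$. $(b_\ell)_i=1-\sum_{j=1}^{\delta_{\ell-1}}\big((A_\ell)_{i,j}+\sum_{c\in\mathrm{Col}}(B_\ell^c)_{i,j}\big)$ if $\ell=1$, or if $1\le\ell<L$ and $\delta_{\ell-1}<i\le\delta_\ell$; otherwise $(b_\ell)_i=0$. *)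

theory Defs
  imports Complex_Main "HOL-Library.Multiset"
begin

text \<open>Atoms: binary E^c(s,t) with colour c, unary U_j(t) (1-based index j).
  Terms of type 't: variables are nat, constants are an arbitrary type 'c.
  A conjunction (formula without inequalities) is the finite set of its conjuncts;
  the empty set is the empty conjunction (top).\<close>

datatype ('col, 't) atom = EA 'col 't 't | UA nat 't

fun atom_terms :: "('col, 't) atom \<Rightarrow> 't set" where
  "atom_terms (EA c s t) = {s, t}"
| "atom_terms (UA j t) = {t}"

fun subst_atom :: "('t \<Rightarrow> 's) \<Rightarrow> ('col, 't) atom \<Rightarrow> ('col, 's) atom" where
  "subst_atom h (EA c s t) = EA c (h s) (h t)"
| "subst_atom h (UA j t) = UA j (h t)"

type_synonym 'col formula = "('col, nat) atom set"
type_synonym 'col rule = "'col formula \<times> ('col, nat) atom"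

definition fvars :: "'col formula \<Rightarrow> nat set" where
  "fvars \<phi> = \<Union> (atom_terms ` \<phi>)"

definition adom :: "('col, 'c) atom set \<Rightarrow> 'c set" where
  "adom D = \<Union> (atom_terms ` D)"

definition sig_dataset :: "nat \<Rightarrow> ('col, 'c) atom set \<Rightarrow> bool" where
  "sig_dataset \<delta> D \<longleftrightarrow> finite D \<and> (\<forall>j t. UA j t \<in> D \<longrightarrow> 1 \<le> j \<and> j \<le> \<delta>)"

definition eq_ren :: "'col formula \<Rightarrow> 'col formula \<Rightarrow> bool" where
  "eq_ren \<phi> \<psi> \<longleftrightarrow> (\<exists>h. bij h \<and> subst_atom h ` \<phi> = \<psi>)"

definition eq_ren_rule :: "'col rule \<Rightarrow> 'col rule \<Rightarrow> bool" where
  "eq_ren_rule r r' \<longleftrightarrow>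
     (\<exists>h. bij h \<and> subst_atom h ` fst r = fst r' \<and> subst_atom h (snd r) = snd r')"

inductive tree_like :: "nat \<Rightarrow> nat \<Rightarrow> 'col formula \<Rightarrow> bool" where
  tl_top: "tree_like \<delta> x {}"
| tl_unary: "1 \<le> j \<Longrightarrow> j \<le> \<delta> \<Longrightarrow> tree_like \<delta> x {UA j x}"
| tl_conj: "tree_like \<delta> x \<phi>1 \<Longrightarrow> tree_like \<delta> x \<phi>2 \<Longrightarrow> fvars \<phi>1 \<inter> fvars \<phi>2 \<subseteq> {x}
            \<Longrightarrow> tree_like \<delta> x (\<phi>1 \<union> \<phi>2)"
| tl_edges: "length ys = length cs \<Longrightarrow> length phis = length cs \<Longrightarrow> distinct ys
   \<Longrightarrow> (\<forall>k<length cs. tree_like \<delta> (ys ! k) (phis ! k))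
   \<Longrightarrow> (\<forall>k<length cs. x \<notin> insert (ys ! k) (fvars (phis ! k)))
   \<Longrightarrow> (\<forall>k<length cs. \<forall>k'<length cs. k \<noteq> k' \<longrightarrow>
          insert (ys ! k) (fvars (phis ! k)) \<inter> insert (ys ! k') (fvars (phis ! k')) = {})
   \<Longrightarrow> tree_like \<delta> x (\<Union>k<length cs. insert (EA (cs ! k) x (ys ! k)) (phis ! k))"

inductive chain_to :: "'col formula \<Rightarrow> nat \<Rightarrow> nat \<Rightarrow> bool" where
  "chain_to \<phi> 0 y"
| "chain_to \<phi> n y \<Longrightarrow> EA c y z \<in> \<phi> \<Longrightarrow> chain_to \<phi> (Suc n) z"

definition var_depth :: "'col formula \<Rightarrow> nat \<Rightarrow> nat" where
  "var_depth \<phi> y = (GREATEST n. chain_to \<phi> n y)"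

definition fdepth :: "'col formula \<Rightarrow> nat" where
  "fdepth \<phi> = Max (insert 0 (var_depth \<phi> ` fvars \<phi>))"

definition fanout :: "'col formula \<Rightarrow> nat \<Rightarrow> nat" where
  "fanout \<phi> y = card {z. \<exists>c. EA c y z \<in> \<phi>}"

definition dftree :: "nat \<Rightarrow> nat \<Rightarrow> nat \<Rightarrow> nat \<Rightarrow> 'col formula \<Rightarrow> bool" where
  "dftree \<delta> d f x \<phi> \<longleftrightarrow> tree_like \<delta> x \<phi> \<and>
     (\<forall>y\<in>fvars \<phi>. (\<forall>n. chain_to \<phi> n y \<longrightarrow> n \<le> d) \<and> fanout \<phi> y \<le> f * (d - var_depth \<phi> y))"

definition dftree_rule :: "nat \<Rightarrow> nat \<Rightarrow> nat \<Rightarrow> 'col rule \<Rightarrow> bool" where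
  "dftree_rule \<delta> d f r \<longleftrightarrow>
     (\<exists>\<phi> j y. r = (\<phi>, UA j y) \<and> 1 \<le> j \<and> j \<le> \<delta> \<and> dftree \<delta> d f y \<phi>)"

definition phi0 :: "nat \<Rightarrow> 'col formula \<Rightarrow> 'col formula" where
  "phi0 x \<phi> = {a \<in> \<phi>. \<exists>j. a = UA j x}"

definition reach :: "'col formula \<Rightarrow> nat \<Rightarrow> nat \<Rightarrow> bool" where
  "reach \<phi> = (\<lambda>a b. \<exists>c. EA c a b \<in> \<phi>)\<^sup>*\<^sup>*"

definition subf :: "'col formula \<Rightarrow> nat \<Rightarrow> 'col formula" where
  "subf \<phi> y = {a \<in> \<phi>. \<forall>z\<in>atom_terms a. reach \<phi> y z}"

text \<open>tau_1..tau_n (here the list, 1-based access via tau) lists every (d,f)-tree-like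
  formula for x exactly once up to renaming, by non-decreasing depth.\<close>
definition tree_enum :: "nat \<Rightarrow> nat \<Rightarrow> nat \<Rightarrow> nat \<Rightarrow> 'col formula list \<Rightarrow> bool" where
  "tree_enum \<delta> d f x \<tau> \<longleftrightarrow>
     (\<forall>\<phi>\<in>set \<tau>. dftree \<delta> d f x \<phi>) \<and>
     (\<forall>\<phi>. dftree \<delta> d f x \<phi> \<longrightarrow> (\<exists>!i. i < length \<tau> \<and> eq_ren \<phi> (\<tau> ! i))) \<and>
     sorted (map fdepth \<tau>)"

definition tau :: "'col formula list \<Rightarrow> nat \<Rightarrow> 'col formula" where
  "tau \<tau> i = \<tau> ! (i - 1)"

record 'col gnn =
  gL :: nat
  gdim :: "nat \<Rightarrow> nat"
  gA :: "nat \<Rightarrow> nat \<Rightarrow> nat \<Rightarrow> real"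
  gB :: "nat \<Rightarrow> 'col \<Rightarrow> nat \<Rightarrow> nat \<Rightarrow> real"
  gb :: "nat \<Rightarrow> nat \<Rightarrow> real"
  gagg :: "nat \<Rightarrow> (nat \<Rightarrow> real) multiset \<Rightarrow> nat \<Rightarrow> real"
  gact :: "real \<Rightarrow> real"
  gcls :: "real \<Rightarrow> real"

text \<open>Layer-l vectors (indices 1..dim l) of all vertices of a graph given by
  coloured edge relations E and input features feat.\<close>
primrec gnn_vec :: "'col gnn \<Rightarrow> ('col \<Rightarrow> 'n \<Rightarrow> 'n \<Rightarrow> bool) \<Rightarrow> ('n \<Rightarrow> nat \<Rightarrow> real)
    \<Rightarrow> nat \<Rightarrow> 'n \<Rightarrow> nat \<Rightarrow> real" where
  "gnn_vec N E feat 0 = feat"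
| "gnn_vec N E feat (Suc l) = (\<lambda>v i. gact N
      ((\<Sum>j = 1..gdim N l. gA N (Suc l) i j * gnn_vec N E feat l v j)
       + (\<Sum>c\<in>UNIV. \<Sum>j = 1..gdim N l. gB N (Suc l) c i j *
            gagg N (Suc l) (image_mset (gnn_vec N E feat l) (mset_set {u. E c v u})) j)
       + gb N (Suc l) i))"

text \<open>Canonical encoding: vertex v_t is represented by the term t itself.\<close>
definition enc_E :: "('col, 'c) atom set \<Rightarrow> 'col \<Rightarrow> 'c \<Rightarrow> 'c \<Rightarrow> bool" where
  "enc_E D c t s \<longleftrightarrow> EA c t s \<in> D"

definition enc_feat :: "('col, 'c) atom set \<Rightarrow> 'c \<Rightarrow> nat \<Rightarrow> real" where
  "enc_feat D t j = (if UA j t \<in> D then 1 else 0)"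

definition relu :: "real \<Rightarrow> real" where
  "relu z = max 0 z"

definition max_agg :: "(nat \<Rightarrow> real) multiset \<Rightarrow> nat \<Rightarrow> real" where
  "max_agg M j = (if M = {#} then 0 else Max ((\<lambda>w. w j) ` set_mset M))"

definition step1 :: "real \<Rightarrow> real" where
  "step1 z = (if z \<ge> 1 then 1 else 0)"

definition NPi_dim :: "nat \<Rightarrow> nat \<Rightarrow> 'col formula list \<Rightarrow> nat \<Rightarrow> nat" where
  "NPi_dim \<delta> d \<tau> l = (if 1 \<le> l \<and> l < d + 2
      then card {i. 1 \<le> i \<and> i \<le> length \<tau> \<and> fdepth (tau \<tau> i) \<le> l - 1} else \<delta>)"

definition NPi_A :: "nat \<Rightarrow> nat \<Rightarrow> nat \<Rightarrow> 'col formula list \<Rightarrow> 'col rule set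
    \<Rightarrow> nat \<Rightarrow> nat \<Rightarrow> nat \<Rightarrow> real" where
  "NPi_A \<delta> d x \<tau> \<Pi> l i j = (if
       (l = 1 \<and> UA j x \<in> tau \<tau> i)
     \<or> (2 \<le> l \<and> l < d + 2 \<and>
         ((i \<le> NPi_dim \<delta> d \<tau> (l - 1) \<and> i = j)
          \<or> (NPi_dim \<delta> d \<tau> (l - 1) < i \<and> i \<le> NPi_dim \<delta> d \<tau> l
             \<and> eq_ren (phi0 x (tau \<tau> i)) (tau \<tau> j))))
     \<or> (l = d + 2 \<and> (\<exists>r\<in>\<Pi>. eq_ren_rule r (tau \<tau> j, UA i x)))
     then 1 else 0)"

definition NPi_B :: "nat \<Rightarrow> nat \<Rightarrow> nat \<Rightarrow> 'col formula list \<Rightarrow> nat \<Rightarrow> 'col \<Rightarrow> nat \<Rightarrow> nat \<Rightarrow> real" where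
  "NPi_B \<delta> d x \<tau> l c i j = (if
       2 \<le> l \<and> l < d + 2 \<and> NPi_dim \<delta> d \<tau> (l - 1) < i \<and> i \<le> NPi_dim \<delta> d \<tau> l \<and>
       (\<exists>y. EA c x y \<in> tau \<tau> i \<and> eq_ren (subf (tau \<tau> i) y) (tau \<tau> j))
     then 1 else 0)"

definition NPi_b :: "nat \<Rightarrow> nat \<Rightarrow> nat \<Rightarrow> 'col::finite formula list \<Rightarrow> 'col rule set
    \<Rightarrow> nat \<Rightarrow> nat \<Rightarrow> real" where
  "NPi_b \<delta> d x \<tau> \<Pi> l i = (if l = 1 \<or> (1 \<le> l \<and> l < d + 2 \<and>
        NPi_dim \<delta> d \<tau> (l - 1) < i \<and> i \<le> NPi_dim \<delta> d \<tau> l)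
     then 1 - (\<Sum>j = 1..NPi_dim \<delta> d \<tau> (l - 1).
                  NPi_A \<delta> d x \<tau> \<Pi> l i j + (\<Sum>c\<in>UNIV. NPi_B \<delta> d x \<tau> l c i j))
     else 0)"

definition NPi :: "nat \<Rightarrow> nat \<Rightarrow> nat \<Rightarrow> 'col::finite formula list \<Rightarrow> 'col rule set \<Rightarrow> 'col gnn" where
  "NPi \<delta> d x \<tau> \<Pi> = \<lparr> gL = d + 2, gdim = NPi_dim \<delta> d \<tau>, gA = NPi_A \<delta> d x \<tau> \<Pi>,
      gB = NPi_B \<delta> d x \<tau>, gb = NPi_b \<delta> d x \<tau> \<Pi>, gagg = (\<lambda>_. max_agg),
      gact = relu, gcls = step1 \<rparr>"

end

theory Submission
  imports Defs "HOL-Combinatorics.Transposition"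
begin

text \<open>The positions of layer \<open>l\<close> of \<open>N\<^sub>\<Pi>\<close> are the tree-like formulas \<open>\<tau>\<^sub>i\<close> of depth
  below \<open>l\<close>, and the claim is proved by induction on \<open>l\<close>. A tree-like formula for \<open>x\<close> holds
  at \<open>t\<close> iff its unary atoms on \<open>x\<close> hold at \<open>t\<close> and, for every edge \<open>E\<^sup>c(x, y)\<close>, the
  subformula rooted at \<open>y\<close> holds at some \<open>E\<^sup>c\<close>-neighbour of \<open>t\<close>. Up to renaming, the unary
  part and these subformulas are formulas \<open>\<tau>\<^sub>j\<close> of smaller depth, i.e. positions of layer
  \<open>l - 1\<close>; so the truth value at a new position is a conjunction of \<open>{0, 1}\<close>-values of
  layer \<open>l - 1\<close> at \<open>t\<close> and, through max aggregation, at its neighbours. A ReLU neuron with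
  \<open>{0, 1}\<close> weights and bias one minus the sum of its weights computes exactly such a
  conjunction, and the positions already present in layer \<open>l - 1\<close> are copied.\<close>

section \<open>Atoms and tree-like formulas\<close>

abbreviation branch_vars :: "nat list \<Rightarrow> 'col formula list \<Rightarrow> nat \<Rightarrow> nat set" where
  "branch_vars ys phis k \<equiv> insert (ys ! k) (fvars (phis ! k))"

abbreviation edges_conj :: "nat \<Rightarrow> 'col list \<Rightarrow> nat list \<Rightarrow> 'col formula list \<Rightarrow> 'col formula" where
  "edges_conj x cs ys phis \<equiv> (\<Union>k<length cs. insert (EA (cs ! k) x (ys ! k)) (phis ! k))"

lemma subst_atom_comp: "subst_atom g (subst_atom h a) = subst_atom (g \<circ> h) a"
  by (cases a) auto

lemma subst_atom_cong: "(\<And>z. z \<in> atom_terms a \<Longrightarrow> g z = h z) \<Longrightarrow> subst_atom g a = subst_atom h a"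
  by (cases a) auto

lemma subst_atom_id [simp]: "subst_atom id a = a"
  by (cases a) auto

lemma atom_terms_subst_atom: "atom_terms (subst_atom h a) = h ` atom_terms a"
  by (cases a) auto

lemma atom_terms_nonempty: "atom_terms a \<noteq> {}"
  by (cases a) auto

lemma finite_atom_terms: "finite (atom_terms a)"
  by (cases a) auto

lemma subst_atom_inv_image:
  assumes "bij h" shows "subst_atom (inv h) ` subst_atom h ` \<phi> = \<phi>"
proof -
  have "inv h \<circ> h = id" using assms by (simp add: bij_is_inj)
  then show ?thesis by (simp add: image_image subst_atom_comp)
qed

lemma EA_in_subst_atom_image:
  "EA c a' b' \<in> subst_atom h ` \<phi> \<longleftrightarrow> (\<exists>a b. EA c a b \<in> \<phi> \<and> a' = h a \<and> b' = h b)"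
proof
  assume "EA c a' b' \<in> subst_atom h ` \<phi>"
  then obtain e where "e \<in> \<phi>" "EA c a' b' = subst_atom h e" by blast
  then show "\<exists>a b. EA c a b \<in> \<phi> \<and> a' = h a \<and> b' = h b" by (cases e) auto
qed (auto intro: image_eqI[of _ _ "EA c _ _"])

lemma fvars_subst_atom_image: "fvars (subst_atom h ` \<phi>) = h ` fvars \<phi>"
  by (auto simp: fvars_def atom_terms_subst_atom)

lemma fvars_simps [simp]:
  "fvars {} = {}"
  "fvars (insert a \<phi>) = atom_terms a \<union> fvars \<phi>"
  "fvars (\<phi> \<union> \<psi>) = fvars \<phi> \<union> fvars \<psi>"
  "fvars (\<Union>k\<in>K. F k) = (\<Union>k\<in>K. fvars (F k))"
  by (auto simp: fvars_def)

lemma fvars_mono: "\<phi> \<subseteq> \<psi> \<Longrightarrow> fvars \<phi> \<subseteq> fvars \<psi>"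
  by (auto simp: fvars_def)

lemma fvarsI: "a \<in> \<phi> \<Longrightarrow> z \<in> atom_terms a \<Longrightarrow> z \<in> fvars \<phi>"
  by (auto simp: fvars_def)

lemma EA_in_fvars:
  assumes "EA c a b \<in> \<phi>" shows "a \<in> fvars \<phi>" "b \<in> fvars \<phi>"
  using fvarsI[OF assms] by auto

lemma UA_in_fvars: "UA j a \<in> \<phi> \<Longrightarrow> a \<in> fvars \<phi>"
  using fvarsI by fastforce

lemma finite_fvars: "finite \<phi> \<Longrightarrow> finite (fvars \<phi>)"
  by (auto simp: fvars_def finite_atom_terms)

lemma edges_conj_root_edge:
  assumes "\<forall>k<length cs. x \<notin> branch_vars ys phis k" "EA c x y \<in> edges_conj x cs ys phis"
  obtains k where "k < length cs" "c = cs ! k" "y = ys ! k"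
  using assms EA_in_fvars(1) by fastforce

lemma tree_like_finite: "tree_like \<delta> x \<phi> \<Longrightarrow> finite \<phi>"
  by (induction rule: tree_like.induct) auto

lemma tree_like_UA_index: "tree_like \<delta> x \<phi> \<Longrightarrow> UA j z \<in> \<phi> \<Longrightarrow> 1 \<le> j \<and> j \<le> \<delta>"
  by (induction rule: tree_like.induct) auto

lemma tree_like_no_edge_into_root: "tree_like \<delta> x \<phi> \<Longrightarrow> EA c a x \<notin> \<phi>"
proof (induction rule: tree_like.induct)
  case (tl_edges ys cs phis \<delta> x)
  then show ?case using EA_in_fvars(2) by fastforce
qed auto

lemma tree_like_var_cases:
  "tree_like \<delta> x \<phi> \<Longrightarrow> z \<in> fvars \<phi> \<Longrightarrow> z = x \<or> (\<exists>c a. EA c a z \<in> \<phi>)"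
proof (induction rule: tree_like.induct)
  case (tl_edges ys cs phis \<delta> x)
  then obtain k where "k < length cs" "z = x \<or> z = ys ! k \<or> z \<in> fvars (phis ! k)"
    by (auto split: if_splits)
  then show ?case using tl_edges.IH by fastforce
qed auto

lemma tree_like_root_in_fvars: "tree_like \<delta> x \<phi> \<Longrightarrow> \<phi> \<noteq> {} \<Longrightarrow> x \<in> fvars \<phi>"
  by (induction rule: tree_like.induct) auto

lemma reach_refl [simp]: "reach \<phi> a a"
  by (simp add: reach_def)

lemma reach_snoc: "reach \<phi> a b \<Longrightarrow> EA c b z \<in> \<phi> \<Longrightarrow> reach \<phi> a z"
  unfolding reach_def by (rule rtranclp.rtrancl_into_rtrancl) auto

lemma reach_Cons: "EA c a b \<in> \<phi> \<Longrightarrow> reach \<phi> b z \<Longrightarrow> reach \<phi> a z"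
  unfolding reach_def by (rule converse_rtranclp_into_rtranclp) auto

lemma reach_mono: "\<phi> \<subseteq> \<psi> \<Longrightarrow> reach \<phi> a b \<Longrightarrow> reach \<psi> a b"
  unfolding reach_def by (erule rtranclp_mono[THEN predicate2D, rotated]) auto

lemma tree_like_reach: "tree_like \<delta> x \<phi> \<Longrightarrow> a \<in> \<phi> \<Longrightarrow> z \<in> atom_terms a \<Longrightarrow> reach \<phi> x z"
proof (induction arbitrary: a z rule: tree_like.induct)
  case (tl_conj \<delta> x \<phi>1 \<phi>2)
  then show ?case by (blast intro: reach_mono[of \<phi>1] reach_mono[of \<phi>2])
next
  case (tl_edges ys cs phis \<delta> x)
  let ?U = "edges_conj x cs ys phis"
  from tl_edges.prems(1) obtain k where k: "k < length cs"
    and a: "a = EA (cs ! k) x (ys ! k) \<or> a \<in> phis ! k" by auto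
  have e: "EA (cs ! k) x (ys ! k) \<in> ?U" and sub: "phis ! k \<subseteq> ?U" using k by auto
  from a show ?case
  proof
    assume "a \<in> phis ! k"
    then have "reach (phis ! k) (ys ! k) z" using tl_edges.IH k tl_edges.prems(2) by blast
    then show ?case using reach_Cons[OF e] reach_mono[OF sub] by blast
  qed (use tl_edges.prems(2) reach_Cons[OF e] in auto)
qed auto

lemma reach_closed:
  assumes "\<forall>c a b. EA c a b \<in> \<phi> \<longrightarrow> a \<in> V \<longrightarrow> b \<in> V \<and> EA c a b \<in> \<psi>"
    and "reach \<phi> y z" and "y \<in> V"
  shows "z \<in> V \<and> reach \<psi> y z"
  using assms(2,3) unfolding reach_def
proof (induction rule: rtranclp_induct)
  case (step b z)
  then obtain c where e: "EA c b z \<in> \<phi>" and "b \<in> V" "reach \<psi> y b" by (auto simp: reach_def)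
  with assms(1) have "z \<in> V" "EA c b z \<in> \<psi>" by auto
  with \<open>reach \<psi> y b\<close> show ?case by (auto simp: reach_def intro: rtranclp.rtrancl_into_rtrancl)
qed simp

lemma subf_subset: "subf \<phi> y \<subseteq> \<phi>"
  by (auto simp: subf_def)

lemma subf_eq_if_closed:
  assumes "\<psi> \<subseteq> \<phi>" "y \<in> V"
    and "\<forall>c a b. EA c a b \<in> \<phi> \<longrightarrow> a \<in> V \<longrightarrow> b \<in> V \<and> EA c a b \<in> \<psi>"
    and "\<forall>a\<in>\<phi>. atom_terms a \<subseteq> V \<longrightarrow> a \<in> \<psi>"
  shows "subf \<phi> y = subf \<psi> y"
proof
  show "subf \<phi> y \<subseteq> subf \<psi> y"
  proof
    fix a assume "a \<in> subf \<phi> y"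
    then have a: "a \<in> \<phi>" "\<forall>z\<in>atom_terms a. reach \<phi> y z" by (auto simp: subf_def)
    then have "\<forall>z\<in>atom_terms a. z \<in> V \<and> reach \<psi> y z"
      using reach_closed[OF assms(3) _ assms(2)] by blast
    then show "a \<in> subf \<psi> y" using assms(4) a(1) by (auto simp: subf_def)
  qed
  show "subf \<psi> y \<subseteq> subf \<phi> y"
    using assms(1) reach_mono[OF assms(1)] by (auto simp: subf_def)
qed

lemma subf_tree_like_root: "tree_like \<delta> y \<psi> \<Longrightarrow> subf \<psi> y = \<psi>"
  using tree_like_reach by (auto simp: subf_def)

lemma subf_Un_left:
  assumes "tree_like \<delta> x \<phi>1" "fvars \<phi>1 \<inter> fvars \<phi>2 \<subseteq> {x}" "EA c x y \<in> \<phi>1"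
  shows "subf (\<phi>1 \<union> \<phi>2) y = subf \<phi>1 y"
proof (rule subf_eq_if_closed[where V="fvars \<phi>1 - {x}"])
  note no_x = tree_like_no_edge_into_root[OF assms(1)]
  show "y \<in> fvars \<phi>1 - {x}" using no_x[of c x] assms(3) EA_in_fvars(2)[OF assms(3)] by blast
  show "\<forall>c a b. EA c a b \<in> \<phi>1 \<union> \<phi>2 \<longrightarrow> a \<in> fvars \<phi>1 - {x} \<longrightarrow>
      b \<in> fvars \<phi>1 - {x} \<and> EA c a b \<in> \<phi>1"
  proof (intro allI impI)
    fix c a b assume e: "EA c a b \<in> \<phi>1 \<union> \<phi>2" and a: "a \<in> fvars \<phi>1 - {x}"
    then have "EA c a b \<in> \<phi>1" using assms(2) EA_in_fvars(1)[of c a b \<phi>2] by blast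
    then show "b \<in> fvars \<phi>1 - {x} \<and> EA c a b \<in> \<phi>1" using no_x[of c a] EA_in_fvars(2)[of c a b \<phi>1] by blast
  qed
  show "\<forall>a\<in>\<phi>1 \<union> \<phi>2. atom_terms a \<subseteq> fvars \<phi>1 - {x} \<longrightarrow> a \<in> \<phi>1"
  proof (intro ballI impI)
    fix a assume a: "a \<in> \<phi>1 \<union> \<phi>2" "atom_terms a \<subseteq> fvars \<phi>1 - {x}"
    obtain z where "z \<in> atom_terms a" using atom_terms_nonempty[of a] by blast
    then show "a \<in> \<phi>1" using a assms(2) fvarsI[of a \<phi>2 z] by blast
  qed
qed simp

lemma subf_edges_conj:
  assumes "\<forall>k<length cs. tree_like \<delta> (ys ! k) (phis ! k)"
    and nx: "\<forall>k<length cs. x \<notin> branch_vars ys phis k"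
    and dj: "\<forall>k<length cs. \<forall>k'<length cs. k \<noteq> k' \<longrightarrow> branch_vars ys phis k \<inter> branch_vars ys phis k' = {}"
    and k: "k < length cs"
  shows "subf (edges_conj x cs ys phis) (ys ! k) = phis ! k"
proof -
  have "subf (edges_conj x cs ys phis) (ys ! k) = subf (phis ! k) (ys ! k)"
  proof (rule subf_eq_if_closed[where V="branch_vars ys phis k"])
    show "\<forall>c a b. EA c a b \<in> edges_conj x cs ys phis \<longrightarrow> a \<in> branch_vars ys phis k \<longrightarrow>
        b \<in> branch_vars ys phis k \<and> EA c a b \<in> phis ! k"
    proof (intro allI impI)
      fix c a b assume e: "EA c a b \<in> edges_conj x cs ys phis" and a: "a \<in> branch_vars ys phis k"
      then obtain k' where k': "k' < length cs" "EA c a b \<in> phis ! k'"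
        using nx k by fastforce
      then have "k' = k" using dj k a EA_in_fvars(1)[OF k'(2)] by blast
      then show "b \<in> branch_vars ys phis k \<and> EA c a b \<in> phis ! k"
        using k'(2) EA_in_fvars(2)[OF k'(2)] by simp
    qed
    show "\<forall>a\<in>edges_conj x cs ys phis. atom_terms a \<subseteq> branch_vars ys phis k \<longrightarrow> a \<in> phis ! k"
    proof (intro ballI impI)
      fix a assume a: "a \<in> edges_conj x cs ys phis" "atom_terms a \<subseteq> branch_vars ys phis k"
      then obtain k' where k': "k' < length cs" "a \<in> phis ! k'"
        using nx k by fastforce
      obtain z where z: "z \<in> atom_terms a" using atom_terms_nonempty[of a] by blast
      have "k' = k" using dj k k'(1) a(2) z fvarsI[OF k'(2) z] by blast
      then show "a \<in> phis ! k" using k'(2) by simp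
    qed
  qed (use k in auto)
  also have "\<dots> = phis ! k" using subf_tree_like_root assms(1) k by blast
  finally show ?thesis .
qed

lemma tree_like_subf: "tree_like \<delta> x \<phi> \<Longrightarrow> EA c x y \<in> \<phi> \<Longrightarrow> tree_like \<delta> y (subf \<phi> y)"
proof (induction rule: tree_like.induct)
  case (tl_conj \<delta> x \<phi>1 \<phi>2)
  show ?case
  proof (cases "EA c x y \<in> \<phi>1")
    case True
    then show ?thesis using tl_conj subf_Un_left[OF tl_conj.hyps(1,3) True] by simp
  next
    case False
    then have "EA c x y \<in> \<phi>2" using tl_conj.prems by simp
    then show ?thesis
      using tl_conj subf_Un_left[OF tl_conj.hyps(2), of \<phi>1] by (simp add: Un_commute Int_commute)
  qed
next
  case (tl_edges ys cs phis \<delta> x)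
  then obtain k where k: "k < length cs" and y: "y = ys ! k"
    by (elim edges_conj_root_edge) blast
  have tl: "\<forall>k<length cs. tree_like \<delta> (ys ! k) (phis ! k)" using tl_edges.IH by blast
  show ?case unfolding y subf_edges_conj[OF tl tl_edges.hyps(4,5) k] using tl k by blast
qed simp_all

section \<open>Satisfaction in a dataset\<close>

definition sat :: "('col, 'c) atom set \<Rightarrow> 'col formula \<Rightarrow> nat \<Rightarrow> 'c \<Rightarrow> bool" where
  "sat D \<phi> z u \<longleftrightarrow> (\<exists>\<nu>. \<nu> z = u \<and> subst_atom \<nu> ` \<phi> \<subseteq> D)"

lemma sat_empty [simp]: "sat D {} z u"
  by (auto simp: sat_def intro: exI[of _ "\<lambda>_. u"])

lemma sat_mono: "\<psi> \<subseteq> \<phi> \<Longrightarrow> sat D \<phi> z u \<Longrightarrow> sat D \<psi> z u"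
  by (auto simp: sat_def)

lemma sat_UN:
  assumes "\<forall>i\<in>I. \<forall>i'\<in>I. i \<noteq> i' \<longrightarrow> fvars (A i) \<inter> fvars (A i') \<subseteq> {x}"
  shows "sat D (\<Union>i\<in>I. A i) x t \<longleftrightarrow> (\<forall>i\<in>I. sat D (A i) x t)"
proof
  assume "\<forall>i\<in>I. sat D (A i) x t"
  then obtain \<nu> where \<nu>: "\<And>i. i \<in> I \<Longrightarrow> \<nu> i x = t \<and> subst_atom (\<nu> i) ` A i \<subseteq> D"
    unfolding sat_def by metis
  define owner where "owner z = (SOME i. i \<in> I \<and> z \<in> fvars (A i))" for z
  have owner: "owner z = i" if "i \<in> I" "z \<in> fvars (A i)" "z \<noteq> x" for i z
    unfolding owner_def using assms that by (intro some_equality) blast+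
  define \<mu> where "\<mu> z = (if z = x then t else \<nu> (owner z) z)" for z
  have "subst_atom \<mu> a \<in> D" if "i \<in> I" "a \<in> A i" for i a
  proof -
    have "subst_atom \<mu> a = subst_atom (\<nu> i) a"
      using \<nu> owner that fvarsI[OF that(2)] by (intro subst_atom_cong) (auto simp: \<mu>_def)
    then show ?thesis using \<nu> that by blast
  qed
  then show "sat D (\<Union>i\<in>I. A i) x t" unfolding sat_def by (intro exI[of _ \<mu>]) (auto simp: \<mu>_def)
qed (blast intro: sat_mono)

lemma sat_Un:
  assumes "fvars A \<inter> fvars B \<subseteq> {x}"
  shows "sat D (A \<union> B) x t \<longleftrightarrow> sat D A x t \<and> sat D B x t"
proof -
  have "A \<union> B = (\<Union>b\<in>UNIV. if b then A else B)" by auto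
  also have "sat D \<dots> x t \<longleftrightarrow> (\<forall>b\<in>UNIV. sat D (if b then A else B) x t)"
    by (rule sat_UN) (use assms in \<open>auto simp: Int_commute\<close>)
  finally show ?thesis by (simp add: all_bool_eq)
qed

lemma sat_insert_root_edge:
  assumes "x \<notin> insert y (fvars \<phi>)"
  shows "sat D (insert (EA c x y) \<phi>) x t \<longleftrightarrow> (\<exists>u. EA c t u \<in> D \<and> sat D \<phi> y u)"
proof
  assume "\<exists>u. EA c t u \<in> D \<and> sat D \<phi> y u"
  then obtain u \<nu> where \<nu>: "EA c t u \<in> D" "\<nu> y = u" "subst_atom \<nu> ` \<phi> \<subseteq> D"
    by (auto simp: sat_def)
  have "subst_atom (\<nu>(x := t)) a = subst_atom \<nu> a" if "a \<in> \<phi>" for a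
    by (rule subst_atom_cong) (use assms fvarsI[OF that] in auto)
  then have "subst_atom (\<nu>(x := t)) ` insert (EA c x y) \<phi> \<subseteq> D"
    using \<nu> assms by auto
  then show "sat D (insert (EA c x y) \<phi>) x t" unfolding sat_def by (intro exI[of _ "\<nu>(x := t)"]) simp
qed (auto simp: sat_def)

lemma sat_edges_conj:
  assumes "\<forall>k<length cs. x \<notin> branch_vars ys phis k"
    and dj: "\<forall>k<length cs. \<forall>k'<length cs. k \<noteq> k' \<longrightarrow> branch_vars ys phis k \<inter> branch_vars ys phis k' = {}"
  shows "sat D (edges_conj x cs ys phis) x t \<longleftrightarrow>
     (\<forall>k<length cs. \<exists>u. EA (cs ! k) t u \<in> D \<and> sat D (phis ! k) (ys ! k) u)"
proof -
  have "sat D (edges_conj x cs ys phis) x t \<longleftrightarrow>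
      (\<forall>k\<in>{..<length cs}. sat D (insert (EA (cs ! k) x (ys ! k)) (phis ! k)) x t)"
  proof (rule sat_UN, intro ballI impI)
    fix k k' assume "k \<in> {..<length cs}" "k' \<in> {..<length cs}" "k \<noteq> k'"
    then have "branch_vars ys phis k \<inter> branch_vars ys phis k' = {}" using dj by blast
    then show "fvars (insert (EA (cs ! k) x (ys ! k)) (phis ! k)) \<inter>
        fvars (insert (EA (cs ! k') x (ys ! k')) (phis ! k')) \<subseteq> {x}" by auto
  qed
  also have "\<dots> \<longleftrightarrow> (\<forall>k<length cs. \<exists>u. EA (cs ! k) t u \<in> D \<and> sat D (phis ! k) (ys ! k) u)"
    using assms(1) sat_insert_root_edge by (metis lessThan_iff)
  finally show ?thesis .
qed

text \<open>One unfolding step of \<open>sat\<close> along the decomposition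
  \<open>\<phi>\<^sub>0 \<and> (E^{c_1}(x, y\<^sub>1) \<and> \<phi>\<^sub>1) \<and> \<dots> \<and> (E^{c_m}(x, y\<^sub>m) \<and> \<phi>\<^sub>m)\<close> used in the construction of
  \<open>N\<^sub>\<Pi>\<close>; here \<open>\<phi>\<^sub>k\<close> is \<open>subf \<phi> y\<^sub>k\<close>.\<close>
definition sat_by_children :: "('col, 'c) atom set \<Rightarrow> 'col formula \<Rightarrow> nat \<Rightarrow> 'c \<Rightarrow> bool" where
  "sat_by_children D \<phi> x t \<longleftrightarrow> (\<forall>j. UA j x \<in> \<phi> \<longrightarrow> UA j t \<in> D) \<and>
     (\<forall>c y. EA c x y \<in> \<phi> \<longrightarrow> (\<exists>u. EA c t u \<in> D \<and> sat D (subf \<phi> y) y u))"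

lemma sat_imp_sat_by_children:
  assumes "sat D \<phi> x t" shows "sat_by_children D \<phi> x t"
proof -
  obtain \<nu> where \<nu>: "\<nu> x = t" "subst_atom \<nu> ` \<phi> \<subseteq> D" using assms by (auto simp: sat_def)
  have "UA j t \<in> D" if "UA j x \<in> \<phi>" for j
    using \<nu> that by force
  moreover have "EA c t (\<nu> y) \<in> D \<and> sat D (subf \<phi> y) y (\<nu> y)" if "EA c x y \<in> \<phi>" for c y
    using \<nu> that subf_subset[of \<phi> y] unfolding sat_def by force
  ultimately show ?thesis unfolding sat_by_children_def by blast
qed

lemma sat_by_children_subset:
  assumes "\<psi> \<subseteq> \<phi>" "\<And>c y. EA c x y \<in> \<psi> \<Longrightarrow> subf \<phi> y = subf \<psi> y"
    and "sat_by_children D \<phi> x t"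
  shows "sat_by_children D \<psi> x t"
proof -
  have "\<exists>u. EA c t u \<in> D \<and> sat D (subf \<psi> y) y u" if "EA c x y \<in> \<psi>" for c y
    using assms(1,3) that unfolding sat_by_children_def assms(2)[OF that, symmetric] by blast
  then show ?thesis using assms(1,3) unfolding sat_by_children_def by blast
qed

lemma sat_by_children_UnD:
  assumes "tree_like \<delta> x \<phi>1" "tree_like \<delta> x \<phi>2" "fvars \<phi>1 \<inter> fvars \<phi>2 \<subseteq> {x}"
    and "sat_by_children D (\<phi>1 \<union> \<phi>2) x t"
  shows "sat_by_children D \<phi>1 x t" "sat_by_children D \<phi>2 x t"
proof -
  have sub1: "subf (\<phi>1 \<union> \<phi>2) y = subf \<phi>1 y" if "EA c x y \<in> \<phi>1" for c y
    using subf_Un_left[OF assms(1,3) that] .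
  show "sat_by_children D \<phi>1 x t" by (rule sat_by_children_subset[OF _ sub1 assms(4)]) simp
  have sub2: "subf (\<phi>1 \<union> \<phi>2) y = subf \<phi>2 y" if "EA c x y \<in> \<phi>2" for c y
    using subf_Un_left[OF assms(2) _ that, of \<phi>1] assms(3) by (simp add: Un_commute Int_commute)
  show "sat_by_children D \<phi>2 x t" by (rule sat_by_children_subset[OF _ sub2 assms(4)]) simp
qed

lemma sat_by_children_imp_sat:
  "tree_like \<delta> x \<phi> \<Longrightarrow> sat_by_children D \<phi> x t \<Longrightarrow> sat D \<phi> x t"
proof (induction arbitrary: t rule: tree_like.induct)
  case (tl_unary j \<delta> x)
  then have "UA j t \<in> D" by (simp add: sat_by_children_def)
  then show ?case unfolding sat_def by (intro exI[of _ "\<lambda>_. t"]) simp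
next
  case (tl_conj \<delta> x \<phi>1 \<phi>2)
  then show ?case
    using sat_by_children_UnD[OF tl_conj.hyps tl_conj.prems] by (simp add: sat_Un[OF tl_conj.hyps(3)])
next
  case (tl_edges ys cs phis \<delta> x)
  have tl: "\<forall>k<length cs. tree_like \<delta> (ys ! k) (phis ! k)" using tl_edges.IH by simp
  have "\<exists>u. EA (cs ! k) t u \<in> D \<and> sat D (phis ! k) (ys ! k) u" if k: "k < length cs" for k
  proof -
    have "EA (cs ! k) x (ys ! k) \<in> edges_conj x cs ys phis" using k by auto
    then obtain u where "EA (cs ! k) t u \<in> D"
      and "sat D (subf (edges_conj x cs ys phis) (ys ! k)) (ys ! k) u"
      using tl_edges.prems unfolding sat_by_children_def by blast
    then show ?thesis using subf_edges_conj[OF tl tl_edges.hyps(4,5) k] by auto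
  qed
  then show ?case by (simp add: sat_edges_conj[OF tl_edges.hyps(4,5)])
qed simp

lemma sat_iff_sat_by_children:
  assumes "tree_like \<delta> x \<phi>" shows "sat D \<phi> x t \<longleftrightarrow> sat_by_children D \<phi> x t"
  using sat_imp_sat_by_children[of D \<phi> x t] sat_by_children_imp_sat[OF assms, of D t] by blast

lemma sat_phi0: "sat D (phi0 x \<phi>) x t \<longleftrightarrow> (\<forall>j. UA j x \<in> \<phi> \<longrightarrow> UA j t \<in> D)"
proof
  assume "sat D (phi0 x \<phi>) x t"
  then show "\<forall>j. UA j x \<in> \<phi> \<longrightarrow> UA j t \<in> D" by (force simp: sat_def phi0_def)
next
  assume "\<forall>j. UA j x \<in> \<phi> \<longrightarrow> UA j t \<in> D"
  then show "sat D (phi0 x \<phi>) x t"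
    unfolding sat_def phi0_def by (intro exI[of _ "\<lambda>_. t"]) auto
qed

section \<open>Renaming and depth\<close>

lemma tree_like_subst_atom_image:
  "tree_like \<delta> y \<psi> \<Longrightarrow> inj h \<Longrightarrow> tree_like \<delta> (h y) (subst_atom h ` \<psi>)"
proof (induction rule: tree_like.induct)
  case (tl_top \<delta> x)
  then show ?case by (simp add: tree_like.tl_top)
next
  case (tl_unary j \<delta> x)
  then show ?case by (simp add: tree_like.tl_unary)
next
  case (tl_conj \<delta> x \<phi>1 \<phi>2)
  have "fvars (subst_atom h ` \<phi>1) \<inter> fvars (subst_atom h ` \<phi>2) = h ` (fvars \<phi>1 \<inter> fvars \<phi>2)"
    by (simp add: fvars_subst_atom_image image_Int[OF tl_conj.prems])
  also have "\<dots> \<subseteq> {h x}" using tl_conj.hyps(3) by blast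
  finally show ?case using tl_conj.IH tl_conj.prems by (simp add: image_Un tree_like.tl_conj)
next
  case (tl_edges ys cs phis \<delta> x)
  let ?ys = "map h ys" and ?phis = "map (image (subst_atom h)) phis"
  have eq: "subst_atom h ` edges_conj x cs ys phis = edges_conj (h x) cs ?ys ?phis"
    using tl_edges.hyps(1,2) by (simp add: image_UN)
  have bv: "branch_vars ?ys ?phis k = h ` branch_vars ys phis k" if "k < length cs" for k
    using that tl_edges.hyps(1,2) by (simp add: fvars_subst_atom_image)
  show ?case unfolding eq
  proof (rule tree_like.tl_edges)
    show "length ?ys = length cs" "length ?phis = length cs" using tl_edges.hyps(1,2) by simp_all
    show "distinct ?ys" using tl_edges.hyps(3) tl_edges.prems by (simp add: distinct_map inj_on_subset[of h UNIV])
    show "\<forall>k<length cs. tree_like \<delta> (?ys ! k) (?phis ! k)"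
      using tl_edges.IH tl_edges.prems tl_edges.hyps(1,2) by simp
    show "\<forall>k<length cs. h x \<notin> branch_vars ?ys ?phis k"
      using tl_edges.hyps(4) tl_edges.prems bv by (simp add: inj_image_mem_iff inj_eq)
    show "\<forall>k<length cs. \<forall>k'<length cs. k \<noteq> k' \<longrightarrow> branch_vars ?ys ?phis k \<inter> branch_vars ?ys ?phis k' = {}"
    proof (intro allI impI)
      fix k k' assume k: "k < length cs" "k' < length cs" "k \<noteq> k'"
      then have "branch_vars ys phis k \<inter> branch_vars ys phis k' = {}" using tl_edges.hyps(5) by blast
      then show "branch_vars ?ys ?phis k \<inter> branch_vars ?ys ?phis k' = {}"
        by (simp only: bv[OF k(1)] bv[OF k(2)] image_Int[OF tl_edges.prems, symmetric] image_empty)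
    qed
  qed
qed

lemma tree_like_renaming_root:
  assumes "tree_like \<delta> y \<psi>1" "tree_like \<delta>' x \<psi>2" "inj h" "subst_atom h ` \<psi>1 = \<psi>2" "\<psi>1 \<noteq> {}"
  shows "h y = x"
proof (rule ccontr)
  assume ne: "h y \<noteq> x"
  have "h y \<in> fvars \<psi>2"
    using tree_like_root_in_fvars[OF assms(1,5)] assms(4) fvars_subst_atom_image by blast
  then obtain c a where "EA c a (h y) \<in> subst_atom h ` \<psi>1"
    using tree_like_var_cases[OF assms(2)] ne assms(4) by blast
  then obtain a' y' where "EA c a' y' \<in> \<psi>1" "h y = h y'"
    unfolding EA_in_subst_atom_image by blast
  then have "EA c a' y \<in> \<psi>1" using injD[OF assms(3)] by metis
  then show False using tree_like_no_edge_into_root[OF assms(1)] by blast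
qed

lemma sat_subst_atom_image:
  assumes "bij h" "\<psi> = {} \<or> h y = x"
  shows "sat D (subst_atom h ` \<psi>) x u \<longleftrightarrow> sat D \<psi> y u"
proof (cases "\<psi> = {}")
  case False
  then have hy: "h y = x" using assms(2) by blast
  show ?thesis
  proof
    assume "sat D (subst_atom h ` \<psi>) x u"
    then obtain \<nu> where "\<nu> x = u" "subst_atom \<nu> ` subst_atom h ` \<psi> \<subseteq> D" by (auto simp: sat_def)
    then show "sat D \<psi> y u" unfolding sat_def
      by (intro exI[of _ "\<nu> \<circ> h"]) (auto simp: hy image_image subst_atom_comp)
  next
    assume "sat D \<psi> y u"
    then obtain \<nu> where \<nu>: "\<nu> y = u" "subst_atom \<nu> ` \<psi> \<subseteq> D" by (auto simp: sat_def)
    have "(\<nu> \<circ> inv h) \<circ> h = \<nu>" using assms(1) by (simp add: fun_eq_iff bij_is_inj)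
    then have "subst_atom (\<nu> \<circ> inv h) ` subst_atom h ` \<psi> = subst_atom \<nu> ` \<psi>"
      by (simp add: image_image subst_atom_comp)
    moreover have "inv h x = y" using hy assms(1) by (metis bij_is_inj inv_f_f)
    ultimately show "sat D (subst_atom h ` \<psi>) x u"
      using \<nu> unfolding sat_def by (intro exI[of _ "\<nu> \<circ> inv h"]) simp
  qed
qed simp

lemma sat_eq_ren:
  assumes "tree_like \<delta> y \<psi>1" "tree_like \<delta>' x \<psi>2" "eq_ren \<psi>1 \<psi>2"
  shows "sat D \<psi>1 y u \<longleftrightarrow> sat D \<psi>2 x u"
proof -
  obtain h where h: "bij h" "subst_atom h ` \<psi>1 = \<psi>2" using assms(3) by (auto simp: eq_ren_def)
  have root: "\<psi>1 = {} \<or> h y = x"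
    using tree_like_renaming_root[OF assms(1,2) bij_is_inj[OF h(1)] h(2)] by blast
  show ?thesis using sat_subst_atom_image[OF h(1) root, of D u] h(2) by simp
qed

lemma chain_to_subst_atom_image: "chain_to \<phi> n z \<Longrightarrow> chain_to (subst_atom g ` \<phi>) n (g z)"
proof (induction rule: chain_to.induct)
  case (2 \<phi> n y c z)
  have "EA c (g y) (g z) \<in> subst_atom g ` \<phi>" using 2(2) by force
  with 2(3) show ?case by (rule chain_to.intros(2))
qed (rule chain_to.intros(1))

lemma chain_to_subst_atom_image_iff:
  assumes "bij h" shows "chain_to (subst_atom h ` \<phi>) n (h z) \<longleftrightarrow> chain_to \<phi> n z"
proof
  assume "chain_to (subst_atom h ` \<phi>) n (h z)"
  then have "chain_to (subst_atom (inv h) ` subst_atom h ` \<phi>) n (inv h (h z))"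
    by (rule chain_to_subst_atom_image)
  then show "chain_to \<phi> n z"
    unfolding subst_atom_inv_image[OF assms] inv_f_f[OF bij_is_inj[OF assms]] .
qed (rule chain_to_subst_atom_image)

lemma chain_to_mono: "chain_to \<phi> n z \<Longrightarrow> \<phi> \<subseteq> \<psi> \<Longrightarrow> chain_to \<psi> n z"
proof (induction rule: chain_to.induct)
  case (2 \<phi> n y c z)
  then show ?case by (blast intro: chain_to.intros(2))
qed (rule chain_to.intros(1))

lemma chain_to_fvars: "chain_to \<phi> n z \<Longrightarrow> 0 < n \<Longrightarrow> z \<in> fvars \<phi>"
  by (induction rule: chain_to.induct) (auto dest: EA_in_fvars(2))

lemma chain_to_edge: "EA c a b \<in> \<phi> \<Longrightarrow> chain_to \<phi> (Suc 0) b"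
  by (rule chain_to.intros(2)[OF chain_to.intros(1)])

definition chains_bounded :: "'col formula \<Rightarrow> nat \<Rightarrow> bool" where
  "chains_bounded \<phi> d \<longleftrightarrow> (\<forall>n z. chain_to \<phi> n z \<longrightarrow> n \<le> d)"

lemma dftree_chains_bounded: "dftree \<delta> d f x \<phi> \<Longrightarrow> chains_bounded \<phi> d"
  unfolding dftree_def chains_bounded_def using chain_to_fvars by fastforce

lemma var_depth_ge: "chains_bounded \<phi> d \<Longrightarrow> chain_to \<phi> n z \<Longrightarrow> n \<le> var_depth \<phi> z"
  unfolding var_depth_def chains_bounded_def by (rule Greatest_le_nat) blast+

lemma chain_to_var_depth: "chains_bounded \<phi> d \<Longrightarrow> chain_to \<phi> (var_depth \<phi> z) z"
  unfolding var_depth_def chains_bounded_def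
  by (rule GreatestI_nat[of _ 0]) (blast intro: chain_to.intros(1))+

lemma fdepth_le_iff:
  assumes "finite \<phi>" "chains_bounded \<phi> d"
  shows "fdepth \<phi> \<le> k \<longleftrightarrow> chains_bounded \<phi> k"
proof
  have fin: "finite (insert 0 (var_depth \<phi> ` fvars \<phi>))"
    using finite_fvars[OF assms(1)] by simp
  show "chains_bounded \<phi> k" if "fdepth \<phi> \<le> k"
    unfolding chains_bounded_def
  proof (intro allI impI)
    fix n z assume c: "chain_to \<phi> n z"
    show "n \<le> k"
    proof (cases "n = 0")
      case False
      then have "var_depth \<phi> z \<le> fdepth \<phi>"
        using chain_to_fvars[OF c] fin unfolding fdepth_def by simp
      then show ?thesis using var_depth_ge[OF assms(2) c] that by simp
    qed simp
  qed
  show "fdepth \<phi> \<le> k" if "chains_bounded \<phi> k"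
    using fin that chain_to_var_depth[OF assms(2)] unfolding fdepth_def chains_bounded_def
    by (subst Max_le_iff) auto
qed

lemma fanout_subst_atom_image:
  assumes "bij h" shows "fanout (subst_atom h ` \<phi>) (h z) = fanout \<phi> z"
proof -
  have inj: "inj h" using assms bij_is_inj by blast
  have "{w. \<exists>c. EA c (h z) w \<in> subst_atom h ` \<phi>} = h ` {w. \<exists>c. EA c z w \<in> \<phi>}"
    unfolding EA_in_subst_atom_image using injD[OF inj] by blast
  then show ?thesis unfolding fanout_def using card_image[OF inj_on_subset[OF inj]] by simp
qed

lemma var_depth_subst_atom_image: "bij h \<Longrightarrow> var_depth (subst_atom h ` \<phi>) (h z) = var_depth \<phi> z"
  unfolding var_depth_def by (simp add: chain_to_subst_atom_image_iff)

lemma dftree_subst_atom_image: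
  assumes "bij h" "dftree \<delta> d f y \<phi>"
  shows "dftree \<delta> d f (h y) (subst_atom h ` \<phi>)"
  unfolding dftree_def
proof (intro conjI ballI)
  show "tree_like \<delta> (h y) (subst_atom h ` \<phi>)"
    using tree_like_subst_atom_image assms bij_is_inj unfolding dftree_def by blast
  fix w assume "w \<in> fvars (subst_atom h ` \<phi>)"
  then obtain z where z: "z \<in> fvars \<phi>" "w = h z" unfolding fvars_subst_atom_image by blast
  then show "\<forall>n. chain_to (subst_atom h ` \<phi>) n w \<longrightarrow> n \<le> d"
    using assms(2) chain_to_subst_atom_image_iff[OF assms(1)] unfolding dftree_def by blast
  show "fanout (subst_atom h ` \<phi>) w \<le> f * (d - var_depth (subst_atom h ` \<phi>) w)"
    using assms(2) z unfolding dftree_def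
    by (simp add: fanout_subst_atom_image[OF assms(1)] var_depth_subst_atom_image[OF assms(1)])
qed

lemma reach_of_fvars_subf: "z \<in> fvars (subf \<phi> y) \<Longrightarrow> reach \<phi> y z"
  by (auto simp: fvars_def subf_def)

lemma fanout_subf:
  assumes "z \<in> fvars (subf \<phi> y)" shows "fanout (subf \<phi> y) z = fanout \<phi> z"
proof -
  have "EA c z w \<in> subf \<phi> y \<longleftrightarrow> EA c z w \<in> \<phi>" for c w
    using reach_snoc[OF reach_of_fvars_subf[OF assms], of c w] reach_of_fvars_subf[OF assms]
    by (auto simp: subf_def)
  then show ?thesis by (simp add: fanout_def)
qed

lemma chain_to_subf:
  assumes "chain_to (subf \<phi> y) n z" "EA c x y \<in> \<phi>" "0 < n"
  shows "chain_to \<phi> (Suc n) z"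
  using assms
proof (induction "subf \<phi> y" n z rule: chain_to.induct)
  case (2 n a c' z)
  have "chain_to \<phi> (Suc n) a"
  proof (cases "n = 0")
    case True
    have "reach \<phi> y a" using EA_in_fvars(1)[OF 2(3)] by (rule reach_of_fvars_subf)
    then have "a = y \<or> (\<exists>c'' b. EA c'' b a \<in> \<phi>)"
      unfolding reach_def by (cases rule: rtranclp.cases) auto
    then show ?thesis using chain_to_edge[OF 2(4)] chain_to_edge True by metis
  qed (use 2 in simp)
  moreover have "EA c' a z \<in> \<phi>" using 2(3) subf_subset by blast
  ultimately show ?case by (rule chain_to.intros(2))
qed simp

lemma dftree_subf:
  assumes "dftree \<delta> d f x \<phi>" "EA c x y \<in> \<phi>"
  shows "dftree \<delta> d f y (subf \<phi> y)"
  unfolding dftree_def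
proof (intro conjI ballI allI impI)
  have b: "chains_bounded \<phi> d" using dftree_chains_bounded[OF assms(1)] .
  then have bs: "chains_bounded (subf \<phi> y) d"
    using chain_to_mono[OF _ subf_subset] unfolding chains_bounded_def by blast
  show "tree_like \<delta> y (subf \<phi> y)"
    using tree_like_subf[OF _ assms(2)] assms(1) unfolding dftree_def by blast
  fix z assume z: "z \<in> fvars (subf \<phi> y)"
  show "n \<le> d" if "chain_to (subf \<phi> y) n z" for n
    using bs that unfolding chains_bounded_def by blast
  have "var_depth (subf \<phi> y) z \<le> var_depth \<phi> z"
    using var_depth_ge[OF b chain_to_mono[OF chain_to_var_depth[OF bs] subf_subset]] .
  moreover have "fanout \<phi> z \<le> f * (d - var_depth \<phi> z)"
    using assms(1) fvars_mono[OF subf_subset] z unfolding dftree_def by blast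
  ultimately show "fanout (subf \<phi> y) z \<le> f * (d - var_depth (subf \<phi> y) z)"
    unfolding fanout_subf[OF z] by (meson diff_le_mono2 mult_le_mono2 order_trans)
qed

lemma tree_like_unary_conj:
  "finite S \<Longrightarrow> \<forall>a\<in>S. \<exists>j. a = UA j x \<and> 1 \<le> j \<and> j \<le> \<delta> \<Longrightarrow> tree_like \<delta> x S"
proof (induction rule: finite_induct)
  case (insert a S)
  then obtain j where j: "a = UA j x" "1 \<le> j" "j \<le> \<delta>" by blast
  have "tree_like \<delta> x ({UA j x} \<union> S)"
    using insert j by (intro tl_conj tl_unary) (auto simp: fvars_def)
  then show ?case using j by simp
qed (rule tl_top)

lemma chain_to_phi0: "chain_to (phi0 x \<phi>) n z \<Longrightarrow> n = 0"
  by (cases rule: chain_to.cases) (auto simp: phi0_def)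

lemma dftree_phi0:
  assumes "tree_like \<delta> x \<phi>" shows "dftree \<delta> d f x (phi0 x \<phi>)"
proof -
  have "tree_like \<delta> x (phi0 x \<phi>)"
    using tree_like_finite[OF assms] tree_like_UA_index[OF assms]
    by (intro tree_like_unary_conj) (auto simp: phi0_def)
  moreover have "fanout (phi0 x \<phi>) z = 0" for z by (simp add: fanout_def phi0_def)
  ultimately show ?thesis using chain_to_phi0 unfolding dftree_def by fastforce
qed

lemma chains_bounded_subf:
  assumes "EA c x y \<in> \<phi>" "chains_bounded \<phi> (Suc k)"
  shows "chains_bounded (subf \<phi> y) k"
  unfolding chains_bounded_def
proof (intro allI impI)
  fix n z assume "chain_to (subf \<phi> y) n z"
  then have "n = 0 \<or> chain_to \<phi> (Suc n) z" using chain_to_subf[OF _ assms(1)] by blast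
  then show "n \<le> k" using assms(2) unfolding chains_bounded_def by fastforce
qed

lemma chains_bounded_eq_ren:
  assumes "eq_ren \<phi> \<psi>" "chains_bounded \<phi> k" shows "chains_bounded \<psi> k"
proof -
  obtain h where h: "bij h" "subst_atom h ` \<phi> = \<psi>" using assms(1) by (auto simp: eq_ren_def)
  have "chain_to \<psi> n (h (inv h w)) \<Longrightarrow> n \<le> k" for n w
    using assms(2) chain_to_subst_atom_image_iff[OF h(1)] h(2) unfolding chains_bounded_def by blast
  then show ?thesis using h(1) unfolding chains_bounded_def by (simp add: bij_is_surj surj_f_inv_f)
qed

lemma eq_ren_subst_atom_image:
  assumes "bij g" "eq_ren (subst_atom g ` \<phi>) \<psi>" shows "eq_ren \<phi> \<psi>"
proof -
  obtain h where "bij h" "subst_atom h ` subst_atom g ` \<phi> = \<psi>" using assms(2) by (auto simp: eq_ren_def)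
  then show ?thesis using assms(1) unfolding eq_ren_def
    by (intro exI[of _ "h \<circ> g"]) (simp add: bij_comp image_image subst_atom_comp)
qed

section \<open>The enumeration and the layers of \<open>N\<^sub>\<Pi>\<close>\<close>

lemma tree_enum_dftree:
  "tree_enum \<delta> d f x \<tau> \<Longrightarrow> 1 \<le> i \<Longrightarrow> i \<le> length \<tau> \<Longrightarrow> dftree \<delta> d f x (tau \<tau> i)"
  unfolding tree_enum_def tau_def by simp

lemma tree_enum_index:
  assumes "tree_enum \<delta> d f x \<tau>" "dftree \<delta> d f x \<phi>"
  obtains j where "1 \<le> j" "j \<le> length \<tau>" "eq_ren \<phi> (tau \<tau> j)"
proof -
  obtain k where "k < length \<tau>" "eq_ren \<phi> (\<tau> ! k)" using assms unfolding tree_enum_def by blast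
  then show ?thesis using that[of "Suc k"] by (simp add: tau_def)
qed

lemma down_closed_eq_atLeastAtMost_card:
  fixes S :: "nat set"
  assumes "finite S" "\<forall>i\<in>S. 1 \<le> i" "\<forall>i\<in>S. \<forall>i'. 1 \<le> i' \<and> i' \<le> i \<longrightarrow> i' \<in> S"
  shows "S = {1..card S}"
proof (cases "S = {}")
  case False
  have "S = {1..Max S}"
  proof
    show "S \<subseteq> {1..Max S}" using assms(1,2) by auto
    show "{1..Max S} \<subseteq> S" using assms(3) Max_in[OF assms(1) False] by auto
  qed
  moreover have "card {1..Max S} = Max S" by simp
  ultimately show ?thesis by metis
qed simp

text \<open>Since the enumeration is sorted by depth, the positions of layer \<open>k\<close> are an initial
  segment of the enumeration.\<close>
lemma NPi_dim_iff:
  assumes "tree_enum \<delta> d f x \<tau>" "1 \<le> k" "k < d + 2"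
  shows "1 \<le> i \<and> i \<le> NPi_dim \<delta> d \<tau> k \<longleftrightarrow> 1 \<le> i \<and> i \<le> length \<tau> \<and> fdepth (tau \<tau> i) \<le> k - 1"
proof -
  define S where "S = {i. 1 \<le> i \<and> i \<le> length \<tau> \<and> fdepth (tau \<tau> i) \<le> k - 1}"
  have sorted: "sorted (map fdepth \<tau>)" using assms(1) by (simp add: tree_enum_def)
  have "S = {1..card S}"
  proof (rule down_closed_eq_atLeastAtMost_card)
    show "\<forall>i\<in>S. \<forall>i'. 1 \<le> i' \<and> i' \<le> i \<longrightarrow> i' \<in> S"
    proof (intro ballI allI impI)
      fix i i' assume i: "i \<in> S" and i': "1 \<le> i' \<and> i' \<le> i"
      then have "i' - 1 \<le> i - 1" "i - 1 < length \<tau>" by (auto simp: S_def)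
      then have "fdepth (\<tau> ! (i' - 1)) \<le> fdepth (\<tau> ! (i - 1))"
        using sorted_nth_mono[OF sorted] by simp
      then show "i' \<in> S" using i i' by (simp add: S_def tau_def)
    qed
  qed (auto simp: S_def)
  moreover have "NPi_dim \<delta> d \<tau> k = card S" using assms(2,3) by (simp add: NPi_dim_def S_def)
  ultimately show ?thesis by (metis (no_types, lifting) S_def atLeastAtMost_iff mem_Collect_eq)
qed

lemma NPi_dim_index:
  assumes en: "tree_enum \<delta> d f x \<tau>" and "dftree \<delta> d f y \<psi>" "chains_bounded \<psi> (l - 1)"
    and l: "1 \<le> l" "l < d + 2"
  obtains j where "1 \<le> j" "j \<le> NPi_dim \<delta> d \<tau> l" "eq_ren \<psi> (tau \<tau> j)"
proof -
  have "dftree \<delta> d f x (subst_atom (transpose y x) ` \<psi>)"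
    using dftree_subst_atom_image[OF bij_transpose[of y x] assms(2)] by simp
  then obtain j where j: "1 \<le> j" "j \<le> length \<tau>" "eq_ren (subst_atom (transpose y x) ` \<psi>) (tau \<tau> j)"
    using tree_enum_index[OF en] by blast
  have er: "eq_ren \<psi> (tau \<tau> j)" using eq_ren_subst_atom_image[OF bij_transpose j(3)] .
  have dj: "dftree \<delta> d f x (tau \<tau> j)" using tree_enum_dftree[OF en j(1,2)] .
  have "fdepth (tau \<tau> j) \<le> l - 1"
    using chains_bounded_eq_ren[OF er assms(3)] dftree_chains_bounded[OF dj]
      fdepth_le_iff tree_like_finite dj unfolding dftree_def by blast
  then show ?thesis using that[OF j(1) _ er] NPi_dim_iff[OF en l] j(1,2) by blast
qed

lemma sat_depth0_iff:
  assumes "dftree \<delta> d f x \<phi>" "fdepth \<phi> = 0"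
  shows "sat D \<phi> x t \<longleftrightarrow> (\<forall>j\<in>{1..\<delta>}. UA j x \<in> \<phi> \<longrightarrow> UA j t \<in> D)"
proof -
  have tl: "tree_like \<delta> x \<phi>" using assms(1) by (simp add: dftree_def)
  have "chains_bounded \<phi> 0"
    using fdepth_le_iff[OF tree_like_finite[OF tl] dftree_chains_bounded[OF assms(1)]] assms(2) by simp
  then have "EA c a b \<notin> \<phi>" for c a b
    using chain_to_edge[of c a b \<phi>] unfolding chains_bounded_def by fastforce
  then show ?thesis
    using tree_like_UA_index[OF tl] unfolding sat_iff_sat_by_children[OF tl] sat_by_children_def
    by auto
qed

lemma tree_like_tau_layer:
  assumes "tree_enum \<delta> d f x \<tau>" "1 \<le> l" "l < d + 2" "j \<in> {1..NPi_dim \<delta> d \<tau> l}"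
  shows "tree_like \<delta> x (tau \<tau> j)"
  using tree_enum_dftree[OF assms(1)] NPi_dim_iff[OF assms(1-3), of j] assms(4)
  by (simp add: dftree_def)

lemma sat_phi0_iff_layer:
  assumes en: "tree_enum \<delta> d f x \<tau>" and tl: "tree_like \<delta> x \<phi>" and l: "1 \<le> l" "l < d + 2"
  shows "(\<forall>j\<in>{1..NPi_dim \<delta> d \<tau> l}. eq_ren (phi0 x \<phi>) (tau \<tau> j) \<longrightarrow> sat D (tau \<tau> j) x t) \<longleftrightarrow>
    sat D (phi0 x \<phi>) x t"
proof -
  have phi0: "tree_like \<delta> x (phi0 x \<phi>)" using dftree_phi0[OF tl] by (simp add: dftree_def)
  have "chains_bounded (phi0 x \<phi>) (l - 1)"
    using chain_to_phi0 unfolding chains_bounded_def by fastforce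
  then obtain j0 where "1 \<le> j0" "j0 \<le> NPi_dim \<delta> d \<tau> l" and er0: "eq_ren (phi0 x \<phi>) (tau \<tau> j0)"
    by (rule NPi_dim_index[OF en dftree_phi0[OF tl] _ l])
  then have j0: "j0 \<in> {1..NPi_dim \<delta> d \<tau> l}" by simp
  have "sat D (tau \<tau> j) x t \<longleftrightarrow> sat D (phi0 x \<phi>) x t"
    if "j \<in> {1..NPi_dim \<delta> d \<tau> l}" "eq_ren (phi0 x \<phi>) (tau \<tau> j)" for j
    using sat_eq_ren[OF phi0 tree_like_tau_layer[OF en l that(1)] that(2), of D t] by (rule sym)
  with j0 er0 show ?thesis by blast
qed

lemma sat_children_iff_layer:
  assumes en: "tree_enum \<delta> d f x \<tau>" and dt: "dftree \<delta> d f x \<phi>" and dep: "fdepth \<phi> \<le> l"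
    and l: "1 \<le> l" "l < d + 2"
  shows "(\<forall>c. \<forall>j\<in>{1..NPi_dim \<delta> d \<tau> l}. (\<exists>y. EA c x y \<in> \<phi> \<and> eq_ren (subf \<phi> y) (tau \<tau> j)) \<longrightarrow>
      (\<exists>u. EA c t u \<in> D \<and> sat D (tau \<tau> j) x u)) \<longleftrightarrow>
    (\<forall>c y. EA c x y \<in> \<phi> \<longrightarrow> (\<exists>u. EA c t u \<in> D \<and> sat D (subf \<phi> y) y u))"
    (is "?edges \<longleftrightarrow> ?children")
proof
  let ?J = "{1..NPi_dim \<delta> d \<tau> l}"
  have tl: "tree_like \<delta> x \<phi>" using dt by (simp add: dftree_def)
  have child: "sat D (subf \<phi> y) y u \<longleftrightarrow> sat D (tau \<tau> j) x u"
    if "EA c x y \<in> \<phi>" "j \<in> ?J" "eq_ren (subf \<phi> y) (tau \<tau> j)" for c y j u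
    using sat_eq_ren[OF tree_like_subf[OF tl that(1)] tree_like_tau_layer[OF en l that(2)] that(3)] .
  {
    assume H: ?edges
    have bnd: "chains_bounded \<phi> (Suc (l - 1))"
      using fdepth_le_iff[OF tree_like_finite[OF tl] dftree_chains_bounded[OF dt]] dep l(1) by simp
    show ?children
    proof (intro allI impI)
      fix c y assume e: "EA c x y \<in> \<phi>"
      obtain j where "1 \<le> j" "j \<le> NPi_dim \<delta> d \<tau> l" and er: "eq_ren (subf \<phi> y) (tau \<tau> j)"
        by (rule NPi_dim_index[OF en dftree_subf[OF dt e] chains_bounded_subf[OF e bnd] l])
      then have j: "j \<in> ?J" by simp
      then obtain u where "EA c t u \<in> D" "sat D (tau \<tau> j) x u" using H e er by blast
      then show "\<exists>u. EA c t u \<in> D \<and> sat D (subf \<phi> y) y u" using child[OF e j er] by blast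
    qed
  next
    assume H: ?children
    show ?edges
    proof (intro allI ballI impI)
      fix c j assume j: "j \<in> ?J" and "\<exists>y. EA c x y \<in> \<phi> \<and> eq_ren (subf \<phi> y) (tau \<tau> j)"
      then obtain y where e: "EA c x y \<in> \<phi>" and er: "eq_ren (subf \<phi> y) (tau \<tau> j)" by blast
      then obtain u where "EA c t u \<in> D" "sat D (subf \<phi> y) y u" using H by blast
      then show "\<exists>u. EA c t u \<in> D \<and> sat D (tau \<tau> j) x u" using child[OF e j er] by blast
    qed
  }
qed

text \<open>The semantic counterpart of the row of a new position of layer \<open>l + 1\<close>.\<close>
lemma sat_iff_layer_conditions:
  assumes en: "tree_enum \<delta> d f x \<tau>" and dt: "dftree \<delta> d f x \<phi>" and dep: "fdepth \<phi> \<le> l"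
    and l: "1 \<le> l" "l < d + 2"
  shows "sat D \<phi> x t \<longleftrightarrow>
    (\<forall>j\<in>{1..NPi_dim \<delta> d \<tau> l}. eq_ren (phi0 x \<phi>) (tau \<tau> j) \<longrightarrow> sat D (tau \<tau> j) x t) \<and>
    (\<forall>c. \<forall>j\<in>{1..NPi_dim \<delta> d \<tau> l}. (\<exists>y. EA c x y \<in> \<phi> \<and> eq_ren (subf \<phi> y) (tau \<tau> j)) \<longrightarrow>
        (\<exists>u. EA c t u \<in> D \<and> sat D (tau \<tau> j) x u))"
proof -
  have tl: "tree_like \<delta> x \<phi>" using dt by (simp add: dftree_def)
  have "sat D \<phi> x t \<longleftrightarrow> sat D (phi0 x \<phi>) x t \<and>
      (\<forall>c y. EA c x y \<in> \<phi> \<longrightarrow> (\<exists>u. EA c t u \<in> D \<and> sat D (subf \<phi> y) y u))"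
    unfolding sat_iff_sat_by_children[OF tl] sat_by_children_def sat_phi0 by (rule refl)
  then show ?thesis
    unfolding sat_phi0_iff_layer[OF en tl l] sat_children_iff_layer[OF en dt dep l] .
qed

section \<open>Arithmetic of the network\<close>

lemma sum_binary_eq_0_or_ge_1:
  fixes e :: "'a \<Rightarrow> real"
  assumes "finite J" "\<forall>j\<in>J. e j \<in> {0, 1}"
  shows "sum e J = 0 \<or> 1 \<le> sum e J"
proof (cases "\<forall>j\<in>J. e j = 0")
  case False
  then obtain j where j: "j \<in> J" "e j = 1" using assms(2) by blast
  have "e j \<le> sum e J" using assms j(1) by (intro member_le_sum) auto
  then show ?thesis using j by simp
qed simp

text \<open>The inputs come in two families, as the self and neighbour inputs of a GNN layer do.\<close>
lemma relu_conjunction_neuron: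
  fixes a m :: "'p \<Rightarrow> real" and b n :: "'q \<Rightarrow> real"
  assumes "finite J" "finite Q"
    and "\<forall>j\<in>J. a j \<in> {0, 1} \<and> m j \<in> {0, 1}" "\<forall>q\<in>Q. b q \<in> {0, 1} \<and> n q \<in> {0, 1}"
  shows "relu ((\<Sum>j\<in>J. a j * m j) + (\<Sum>q\<in>Q. b q * n q) + (1 - ((\<Sum>j\<in>J. a j) + (\<Sum>q\<in>Q. b q)))) =
    of_bool ((\<forall>j\<in>J. a j = 1 \<longrightarrow> m j = 1) \<and> (\<forall>q\<in>Q. b q = 1 \<longrightarrow> n q = 1))"
proof -
  define e where "e j = a j * (1 - m j)" for j
  define e' where "e' q = b q * (1 - n q)" for q
  have arg: "(\<Sum>j\<in>J. a j * m j) + (\<Sum>q\<in>Q. b q * n q) + (1 - ((\<Sum>j\<in>J. a j) + (\<Sum>q\<in>Q. b q)))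
      = 1 - (sum e J + sum e' Q)"
    by (simp add: e_def e'_def algebra_simps sum_subtractf)
  have e01: "\<forall>j\<in>J. e j \<in> {0, 1}" and e'01: "\<forall>q\<in>Q. e' q \<in> {0, 1}"
    using assms(3,4) by (auto simp: e_def e'_def)
  have "sum e J = 0 \<longleftrightarrow> (\<forall>j\<in>J. e j = 0)"
    using assms(1) e01 by (intro sum_nonneg_eq_0_iff) auto
  also have "\<dots> \<longleftrightarrow> (\<forall>j\<in>J. a j = 1 \<longrightarrow> m j = 1)"
    using assms(3) by (auto simp: e_def)
  finally have z: "sum e J = 0 \<longleftrightarrow> (\<forall>j\<in>J. a j = 1 \<longrightarrow> m j = 1)" .
  have "sum e' Q = 0 \<longleftrightarrow> (\<forall>q\<in>Q. e' q = 0)"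
    using assms(2) e'01 by (intro sum_nonneg_eq_0_iff) auto
  also have "\<dots> \<longleftrightarrow> (\<forall>q\<in>Q. b q = 1 \<longrightarrow> n q = 1)"
    using assms(4) by (auto simp: e'_def)
  finally have z': "sum e' Q = 0 \<longleftrightarrow> (\<forall>q\<in>Q. b q = 1 \<longrightarrow> n q = 1)" .
  have "sum e J = 0 \<or> 1 \<le> sum e J" "sum e' Q = 0 \<or> 1 \<le> sum e' Q"
    using sum_binary_eq_0_or_ge_1 assms(1,2) e01 e'01 by blast+
  moreover have "0 \<le> sum e J" "0 \<le> sum e' Q"
    using e01 e'01 by (auto intro!: sum_nonneg)
  ultimately show ?thesis unfolding arg relu_def z[symmetric] z'[symmetric] by auto
qed

lemma max_agg_binary:
  assumes "finite U" "\<forall>u\<in>U. g u j \<in> {0, 1}"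
  shows "max_agg (image_mset g (mset_set U)) j = of_bool (\<exists>u\<in>U. g u j = 1)"
proof (cases "U = {}")
  case False
  have vals: "(\<lambda>w. w j) ` set_mset (image_mset g (mset_set U)) = (\<lambda>u. g u j) ` U"
    using assms(1) by (auto simp: image_image)
  have "Max ((\<lambda>u. g u j) ` U) = of_bool (\<exists>u\<in>U. g u j = 1)"
  proof (rule Max_eqI)
    show "y \<le> of_bool (\<exists>u\<in>U. g u j = 1)" if "y \<in> (\<lambda>u. g u j) ` U" for y
      using that assms(2) by auto
    show "of_bool (\<exists>u\<in>U. g u j = 1) \<in> (\<lambda>u. g u j) ` U"
      using False assms(2) by (cases "\<exists>u\<in>U. g u j = 1") force+
  qed (use assms(1) in simp)
  then show ?thesis using False assms(1) vals by (simp add: max_agg_def mset_set_empty_iff)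
qed (simp add: max_agg_def)

section \<open>The network \<open>N\<^sub>\<Pi>\<close> on the canonical encoding\<close>

lemma finite_adom: "finite D \<Longrightarrow> finite (adom D)"
  unfolding adom_def by (intro finite_Union) (auto simp: finite_atom_terms)

lemma EA_target_in_adom: "EA c t u \<in> D \<Longrightarrow> u \<in> adom D"
  unfolding adom_def by (rule UN_I[of "EA c t u"]) simp_all

lemma finite_EA_targets: "finite D \<Longrightarrow> finite {u. EA c t u \<in> D}"
  by (rule finite_subset[OF _ finite_adom]) (auto intro: EA_target_in_adom)

abbreviation NPi_vec :: "nat \<Rightarrow> nat \<Rightarrow> nat \<Rightarrow> 'col::finite formula list \<Rightarrow> 'col rule set
    \<Rightarrow> ('col, 'c) atom set \<Rightarrow> nat \<Rightarrow> 'c \<Rightarrow> nat \<Rightarrow> real" where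
  "NPi_vec \<delta> d x \<tau> \<Pi> D \<equiv> gnn_vec (NPi \<delta> d x \<tau> \<Pi>) (enc_E D) (enc_feat D)"

lemma NPi_vec_Suc:
  "NPi_vec \<delta> d x \<tau> \<Pi> D (Suc l) t i = relu
     ((\<Sum>j = 1..NPi_dim \<delta> d \<tau> l. NPi_A \<delta> d x \<tau> \<Pi> (Suc l) i j * NPi_vec \<delta> d x \<tau> \<Pi> D l t j)
      + (\<Sum>c\<in>UNIV. \<Sum>j = 1..NPi_dim \<delta> d \<tau> l. NPi_B \<delta> d x \<tau> (Suc l) c i j *
           max_agg (image_mset (NPi_vec \<delta> d x \<tau> \<Pi> D l) (mset_set {u. EA c t u \<in> D})) j)
      + NPi_b \<delta> d x \<tau> \<Pi> (Suc l) i)"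
  by (simp add: NPi_def enc_E_def)

declare gnn_vec.simps(2) [simp del]

lemma NPi_vec_conjunction_row:
  fixes \<tau> :: "'col::finite formula list" and D :: "('col, 'c) atom set"
  assumes "finite D"
    and row: "l = 0 \<or> Suc l < d + 2 \<and> NPi_dim \<delta> d \<tau> l < i \<and> i \<le> NPi_dim \<delta> d \<tau> (Suc l)"
    and binary: "\<And>u j. u \<in> adom D \<Longrightarrow> j \<in> {1..NPi_dim \<delta> d \<tau> l} \<Longrightarrow>
        NPi_vec \<delta> d x \<tau> \<Pi> D l u j \<in> {0, 1}"
    and "t \<in> adom D"
  shows "NPi_vec \<delta> d x \<tau> \<Pi> D (Suc l) t i = of_bool
    ((\<forall>j\<in>{1..NPi_dim \<delta> d \<tau> l}. NPi_A \<delta> d x \<tau> \<Pi> (Suc l) i j = 1 \<longrightarrow> NPi_vec \<delta> d x \<tau> \<Pi> D l t j = 1) \<and>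
     (\<forall>c. \<forall>j\<in>{1..NPi_dim \<delta> d \<tau> l}. NPi_B \<delta> d x \<tau> (Suc l) c i j = 1 \<longrightarrow>
        (\<exists>u. EA c t u \<in> D \<and> NPi_vec \<delta> d x \<tau> \<Pi> D l u j = 1)))"
proof -
  let ?J = "{1..NPi_dim \<delta> d \<tau> l}"
  let ?v = "NPi_vec \<delta> d x \<tau> \<Pi> D l"
  let ?A = "NPi_A \<delta> d x \<tau> \<Pi> (Suc l) i" and ?B = "\<lambda>(c, j). NPi_B \<delta> d x \<tau> (Suc l) c i j"
  let ?agg = "\<lambda>(c, j). max_agg (image_mset ?v (mset_set {u. EA c t u \<in> D})) j"
  have agg: "?agg (c, j) = of_bool (\<exists>u. EA c t u \<in> D \<and> ?v u j = 1)" if "j \<in> ?J" for c j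
    using max_agg_binary[OF finite_EA_targets[OF assms(1)], of c t ?v j]
      binary[OF EA_target_in_adom that] by simp
  have "NPi_b \<delta> d x \<tau> \<Pi> (Suc l) i = 1 - (\<Sum>j\<in>?J. ?A j + (\<Sum>c\<in>UNIV. ?B (c, j)))"
    using row by (auto simp: NPi_b_def)
  also have "\<dots> = 1 - ((\<Sum>j\<in>?J. ?A j) + (\<Sum>q\<in>UNIV \<times> ?J. ?B q))"
    by (simp add: sum.distrib sum.swap[of _ UNIV] sum.cartesian_product)
  finally have "NPi_vec \<delta> d x \<tau> \<Pi> D (Suc l) t i = relu ((\<Sum>j\<in>?J. ?A j * ?v t j)
      + (\<Sum>q\<in>UNIV \<times> ?J. ?B q * ?agg q) + (1 - ((\<Sum>j\<in>?J. ?A j) + (\<Sum>q\<in>UNIV \<times> ?J. ?B q))))"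
    unfolding NPi_vec_Suc by (simp add: sum.cartesian_product case_prod_beta)
  also have "\<dots> = of_bool ((\<forall>j\<in>?J. ?A j = 1 \<longrightarrow> ?v t j = 1) \<and> (\<forall>q\<in>UNIV \<times> ?J. ?B q = 1 \<longrightarrow> ?agg q = 1))"
    using binary[OF assms(4)] agg
    by (intro relu_conjunction_neuron) (auto simp: NPi_A_def NPi_B_def)
  finally show ?thesis using agg by simp
qed

lemma NPi_vec_copy_row:
  assumes "1 \<le> l" "Suc l < d + 2" "1 \<le> i" "i \<le> NPi_dim \<delta> d \<tau> l"
    and "NPi_vec \<delta> d x \<tau> \<Pi> D l t i \<in> {0, 1}"
  shows "NPi_vec \<delta> d x \<tau> \<Pi> D (Suc l) t i = NPi_vec \<delta> d x \<tau> \<Pi> D l t i"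
proof -
  let ?v = "NPi_vec \<delta> d x \<tau> \<Pi> D l t"
  have "NPi_A \<delta> d x \<tau> \<Pi> (Suc l) i j = (if j = i then 1 else 0)" for j
    using assms(1,2,4) by (auto simp: NPi_A_def)
  then have "(\<Sum>j = 1..NPi_dim \<delta> d \<tau> l. NPi_A \<delta> d x \<tau> \<Pi> (Suc l) i j * ?v j) =
      (\<Sum>j = 1..NPi_dim \<delta> d \<tau> l. if j = i then ?v j else 0)"
    by (intro sum.cong) simp_all
  also have "\<dots> = ?v i" using assms(3,4) by (simp add: sum.delta')
  finally have self: "(\<Sum>j = 1..NPi_dim \<delta> d \<tau> l. NPi_A \<delta> d x \<tau> \<Pi> (Suc l) i j * ?v j) = ?v i" .
  have "NPi_B \<delta> d x \<tau> (Suc l) c i j = 0" for c j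
    using assms(4) by (simp add: NPi_B_def)
  moreover have "NPi_b \<delta> d x \<tau> \<Pi> (Suc l) i = 0"
    using assms(1,4) by (simp add: NPi_b_def)
  ultimately show ?thesis
    using assms(5) unfolding NPi_vec_Suc self by (auto simp: relu_def)
qed

lemma NPi_vec_first_layer:
  fixes D :: "('col::finite, 'c) atom set"
  assumes en: "tree_enum \<delta> d f x \<tau>" and "finite D" "1 \<le> i" "i \<le> NPi_dim \<delta> d \<tau> 1" "t \<in> adom D"
  shows "NPi_vec \<delta> d x \<tau> \<Pi> D 1 t i = of_bool (sat D (tau \<tau> i) x t)"
proof -
  have len: "i \<le> length \<tau>" and dep: "fdepth (tau \<tau> i) = 0"
    using NPi_dim_iff[OF en, of 1 i] assms(3,4) by auto
  note sat = sat_depth0_iff[OF tree_enum_dftree[OF en assms(3) len] dep, of D t]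
  have dim0: "NPi_dim \<delta> d \<tau> 0 = \<delta>" by (simp add: NPi_dim_def)
  have "NPi_vec \<delta> d x \<tau> \<Pi> D 0 u j \<in> {0, 1}" for u j by (simp add: enc_feat_def)
  then have "NPi_vec \<delta> d x \<tau> \<Pi> D (Suc 0) t i = of_bool
    ((\<forall>j\<in>{1..\<delta>}. NPi_A \<delta> d x \<tau> \<Pi> (Suc 0) i j = 1 \<longrightarrow> enc_feat D t j = 1) \<and>
     (\<forall>c. \<forall>j\<in>{1..\<delta>}. NPi_B \<delta> d x \<tau> (Suc 0) c i j = 1 \<longrightarrow> (\<exists>u. EA c t u \<in> D \<and> enc_feat D u j = 1)))"
    using NPi_vec_conjunction_row[OF assms(2), of 0 d \<delta> \<tau> i x \<Pi> t] assms(5) unfolding dim0 by simp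
  moreover have "NPi_A \<delta> d x \<tau> \<Pi> (Suc 0) i j = 1 \<longleftrightarrow> UA j x \<in> tau \<tau> i" for j
    by (simp add: NPi_A_def)
  moreover have "NPi_B \<delta> d x \<tau> (Suc 0) c i j = 0" for c j
    by (simp add: NPi_B_def)
  ultimately show ?thesis unfolding sat by (auto simp: enc_feat_def)
qed

lemma NPi_vec_new_row:
  fixes D :: "('col::finite, 'c) atom set"
  assumes en: "tree_enum \<delta> d f x \<tau>" and "finite D" and l: "1 \<le> l" "Suc l < d + 2"
    and i: "NPi_dim \<delta> d \<tau> l < i" "i \<le> NPi_dim \<delta> d \<tau> (Suc l)" and "t \<in> adom D"
    and IH: "\<And>u j. u \<in> adom D \<Longrightarrow> j \<in> {1..NPi_dim \<delta> d \<tau> l} \<Longrightarrow>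
      NPi_vec \<delta> d x \<tau> \<Pi> D l u j = of_bool (sat D (tau \<tau> j) x u)"
  shows "NPi_vec \<delta> d x \<tau> \<Pi> D (Suc l) t i = of_bool (sat D (tau \<tau> i) x t)"
proof -
  let ?J = "{1..NPi_dim \<delta> d \<tau> l}"
  have "1 \<le> i" "i \<le> length \<tau>" "fdepth (tau \<tau> i) \<le> l"
    using NPi_dim_iff[OF en, of "Suc l" i] l i by auto
  then have sat: "sat D (tau \<tau> i) x t \<longleftrightarrow>
    (\<forall>j\<in>?J. eq_ren (phi0 x (tau \<tau> i)) (tau \<tau> j) \<longrightarrow> sat D (tau \<tau> j) x t) \<and>
    (\<forall>c. \<forall>j\<in>?J. (\<exists>y. EA c x y \<in> tau \<tau> i \<and> eq_ren (subf (tau \<tau> i) y) (tau \<tau> j)) \<longrightarrow>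
        (\<exists>u. EA c t u \<in> D \<and> sat D (tau \<tau> j) x u))"
    using sat_iff_layer_conditions[OF en tree_enum_dftree[OF en] _ l(1)] l(2) by simp
  have A: "NPi_A \<delta> d x \<tau> \<Pi> (Suc l) i j = 1 \<longleftrightarrow> eq_ren (phi0 x (tau \<tau> i)) (tau \<tau> j)" for j
    using l i by (auto simp: NPi_A_def)
  have B: "NPi_B \<delta> d x \<tau> (Suc l) c i j = 1 \<longleftrightarrow>
      (\<exists>y. EA c x y \<in> tau \<tau> i \<and> eq_ren (subf (tau \<tau> i) y) (tau \<tau> j))" for c j
    using l i by (simp add: NPi_B_def)
  have self: "NPi_vec \<delta> d x \<tau> \<Pi> D l t j = 1 \<longleftrightarrow> sat D (tau \<tau> j) x t" if "j \<in> ?J" for j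
    using IH[OF assms(7) that] by simp
  have nbr: "(\<exists>u. EA c t u \<in> D \<and> NPi_vec \<delta> d x \<tau> \<Pi> D l u j = 1) \<longleftrightarrow>
      (\<exists>u. EA c t u \<in> D \<and> sat D (tau \<tau> j) x u)" if "j \<in> ?J" for c j
    using IH[OF EA_target_in_adom that] by auto
  have "NPi_vec \<delta> d x \<tau> \<Pi> D l u j \<in> {0, 1}" if "u \<in> adom D" "j \<in> ?J" for u j
    using IH[OF that] by simp
  then have "NPi_vec \<delta> d x \<tau> \<Pi> D (Suc l) t i = of_bool
    ((\<forall>j\<in>?J. NPi_A \<delta> d x \<tau> \<Pi> (Suc l) i j = 1 \<longrightarrow> NPi_vec \<delta> d x \<tau> \<Pi> D l t j = 1) \<and>
     (\<forall>c. \<forall>j\<in>?J. NPi_B \<delta> d x \<tau> (Suc l) c i j = 1 \<longrightarrow>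
        (\<exists>u. EA c t u \<in> D \<and> NPi_vec \<delta> d x \<tau> \<Pi> D l u j = 1)))"
    using NPi_vec_conjunction_row[OF assms(2), of l d \<delta> \<tau> i x \<Pi> t] l i assms(7) by simp
  also have "\<dots> = of_bool (sat D (tau \<tau> i) x t)"
    unfolding sat by (simp add: A B self nbr)
  finally show ?thesis .
qed

lemma NPi_vec_eq_sat:
  fixes D :: "('col::finite, 'c) atom set"
  assumes en: "tree_enum \<delta> d f x \<tau>" and "finite D"
  shows "1 \<le> l \<Longrightarrow> l < d + 2 \<Longrightarrow> 1 \<le> i \<Longrightarrow> i \<le> NPi_dim \<delta> d \<tau> l \<Longrightarrow> t \<in> adom D \<Longrightarrow>
    NPi_vec \<delta> d x \<tau> \<Pi> D l t i = of_bool (sat D (tau \<tau> i) x t)"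
proof (induction l arbitrary: i t rule: nat_induct_at_least)
  case base
  then show ?case using NPi_vec_first_layer[OF en assms(2)] by blast
next
  case (Suc l)
  have IH: "NPi_vec \<delta> d x \<tau> \<Pi> D l u j = of_bool (sat D (tau \<tau> j) x u)"
    if "u \<in> adom D" "j \<in> {1..NPi_dim \<delta> d \<tau> l}" for u j
    using Suc.IH Suc.prems(1) that by simp
  show ?case
  proof (cases "i \<le> NPi_dim \<delta> d \<tau> l")
    case True
    then have "NPi_vec \<delta> d x \<tau> \<Pi> D l t i = of_bool (sat D (tau \<tau> i) x t)"
      using IH Suc.prems(2,4) by simp
    moreover have "NPi_vec \<delta> d x \<tau> \<Pi> D (Suc l) t i = NPi_vec \<delta> d x \<tau> \<Pi> D l t i"
      by (rule NPi_vec_copy_row[OF Suc.hyps Suc.prems(1,2) True]) (simp add: calculation)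
    ultimately show ?thesis by simp
  next
    case False
    then show ?thesis
      using NPi_vec_new_row[OF en assms(2) Suc.hyps Suc.prems(1) _ Suc.prems(3,4) IH] by simp
  qed
qed

theorem lemma7:
  fixes \<delta> d f x :: nat
    and \<tau> :: "('col::finite) formula list"
    and \<Pi> :: "'col rule set"
    and D :: "('col, 'c) atom set"
    and l i :: nat and t :: 'c
  assumes "finite \<Pi>"
    and "\<forall>r\<in>\<Pi>. dftree_rule \<delta> d f r"
    and "tree_enum \<delta> d f x \<tau>"
    and "sig_dataset \<delta> D"
    and "1 \<le> l" and "l < d + 2"
    and "1 \<le> i" and "i \<le> NPi_dim \<delta> d \<tau> l"
    and "t \<in> adom D"
  shows "gnn_vec (NPi \<delta> d x \<tau> \<Pi>) (enc_E D) (enc_feat D) l t i =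
           (if \<exists>\<nu>. \<nu> x = t \<and> subst_atom \<nu> ` tau \<tau> i \<subseteq> D then 1 else 0)"
proof -
  \<comment> \<open>The rules of \<open>\<Pi>\<close> only enter the last layer.\<close>
  have "finite D" using assms(4) by (simp add: sig_dataset_def)
  from NPi_vec_eq_sat[OF assms(3) this assms(5-9)] show ?thesis
    by (simp add: sat_def of_bool_def)
qed

end
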